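(* Let $n\ge1$, $\gamma>0$, and let $g_i,f_j:[0,1]\to[0,\infty)$, $i,j=1,\dots,n$, be $\mathcal C^1$ functions. Consider the system $$\dot{x}_i = -x_i g_i(x_i)\sum_{j=1}^n f_j(y_j)y_j,\qquad \dot{y}_i = x_i g_i(x_i)\sum_{j=1}^n f_j(y_j)y_j-\gamma y_i,\qquad i=1,\dots,n,$$ with initial condition $(x(0),y(0))\in\mathcal S=\{(x,y)\in[0,1]^{2n}:x+y\le\mathbf 1\}$ satisfying $\mathbf 0\lneq x(0)\le\mathbf 1-y(0)\lneq\mathbf 1$. Assume that $g(x)>\mathbf 0$ and $f(y)>\mathbf 0$ for all $(x,y)\in\mathcal S$, that $x_i\mapsto x_ig_i(x_i)$ is increasing for every $i$, and that $y_j\mapsto f_j(y_j)y_j$ is increasing and concave for every $j$. Let $\bar y(t)=\sum_{j=1}^n f_j(y_j(t))\,y_j(t)$. Then: (i) if $\dot{\bar y}(0)\le 0$, then $\bar y(t)$ is strictly decreasing for $t\ge0$; (ii) if $\dot{\bar y}(0)>0$, then there exists $\hat t>0$ such that $\bar y(t)$ is strictly increasing on $[0,\hat t]$ and strictly decreasing on $[\hat t,+\infty)$.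
   Context: Vector inequalities are entrywise: $u\le v$ means $u_i\le v_i$ for all $i$, $u<v$ means $u_i<v_i$ for all $i$, and $u\lneq v$ means $u\le v$ with $u_j<v_j$ for some $j$. $g(x)$ denotes the vector $(g_1(x_1),\dots,g_n(x_n))$ and $f(y)$ the vector $(f_1(y_1),\dots,f_n(y_n))$. The system is the network SIR model with rank-one interaction matrix $A_{ij}(x,y)=g_i(x_i)f_j(y_j)$. *)

theory Defs
  imports "HOL-Analysis.Analysis"
begin

definition C1_on_unit :: "(real \<Rightarrow> real) \<Rightarrow> bool" where
  "C1_on_unit h \<longleftrightarrow> (\<exists>h'. continuous_on {0..1} h' \<and>
      (\<forall>s\<in>{0..1}. (h has_real_derivative h' s) (at s within {0..1})))"

text \<open>The state space S = {(x,y) in [0,1]^(2n) : x + y <= 1}; vectors are functions on nat,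
  only the indices below n matter.\<close>
definition S_set :: "nat \<Rightarrow> ((nat \<Rightarrow> real) \<times> (nat \<Rightarrow> real)) set" where
  "S_set n = {(x, y). \<forall>i<n. 0 \<le> x i \<and> x i \<le> 1 \<and> 0 \<le> y i \<and> y i \<le> 1 \<and> x i + y i \<le> 1}"

definition ybar :: "nat \<Rightarrow> (nat \<Rightarrow> real \<Rightarrow> real) \<Rightarrow> (nat \<Rightarrow> real) \<Rightarrow> real" where
  "ybar n f y = (\<Sum>j<n. f j (y j) * y j)"

end

theory Submission
  imports Defs
begin

text \<open>
  Write ybar = sum_j F_j(y_j) with F_j(s) = f_j(s) s and G_i(s) = s g_i(s). Its derivative
  W = sum_j F_j'(y_j) y_j' is merely continuous, but since F_j' is antitone (F_j is concave), the
  upper right Dini derivative of W is at most ybar sum_j F_j'(y_j) (G_j(x_j))' +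
  (sum_j F_j'(y_j) G_j(x_j) - gamma) W, and the first term is nonpositive. A Gronwall-type
  comparison for Dini derivatives shows that W stays nonpositive once it is, so that ybar is
  nonincreasing from then on. The decrease is strict: where ybar is constant, W vanishes, which
  forces G_i(x_i) to be constant for an i with x_i(0) > 0, whereas x_i strictly decreases.
  Finally, W cannot stay positive forever: ybar >= ybar(0) > 0 would bound sum_j y_j from below,
  and then sum_j (x_j + y_j), whose derivative is -gamma sum_j y_j, would become negative.
  Hence either W(0) <= 0, which is case (i), or W has a first zero t > 0, which is case (ii).
\<close>

lemma mvt_half_line:
  fixes \<phi> \<phi>' :: "real \<Rightarrow> real"
  assumes deriv: "\<And>r. 0 \<le> r \<Longrightarrow> (\<phi> has_real_derivative \<phi>' r) (at r within {0..})"
    and "0 \<le> s" "s < t"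
  obtains \<xi> where "s < \<xi>" "\<xi> < t" "\<phi> t - \<phi> s = (t - s) * \<phi>' \<xi>"
proof -
  have "(\<phi> has_derivative (*) (\<phi>' r)) (at r within {s..t})" if "s \<le> r" "r \<le> t" for r
    using DERIV_subset[OF deriv, of r "{s..t}"] that \<open>0 \<le> s\<close>
    by (auto simp: has_field_derivative_def)
  then obtain \<xi> where "\<xi> \<in> {s<..<t}" "\<phi> t - \<phi> s = \<phi>' \<xi> * (t - s)"
    using mvt_simple[OF \<open>s < t\<close>, of \<phi> "\<lambda>r h. \<phi>' r * h"] by blast
  with that show ?thesis by (metis greaterThanLessThan_iff mult.commute)
qed

lemma pos_if_deriv_ge_linear:
  fixes u u' :: "real \<Rightarrow> real"
  assumes deriv: "\<And>s. 0 \<le> s \<Longrightarrow> (u has_real_derivative u' s) (at s within {0..})"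
    and lower: "\<And>s. 0 \<le> s \<Longrightarrow> s \<le> t \<Longrightarrow> - C * u s \<le> u' s"
    and "0 < u 0" "0 \<le> t"
  shows "0 < u t"
proof (cases "t = 0")
  case False
  define v where "v s = u s * exp (C * s)" for s
  have v_deriv: "(v has_real_derivative (u' s + C * u s) * exp (C * s)) (at s within {0..})"
    if "0 \<le> s" for s
    unfolding v_def using deriv[OF that]
    by (auto intro!: derivative_eq_intros simp: algebra_simps)
  have "0 < t"
    using False \<open>0 \<le> t\<close> by simp
  obtain \<xi> where \<xi>: "0 < \<xi>" "\<xi> < t" "v t - v 0 = (t - 0) * ((u' \<xi> + C * u \<xi>) * exp (C * \<xi>))"
    by (rule mvt_half_line[OF v_deriv order.refl \<open>0 < t\<close>])
  have "0 \<le> u' \<xi> + C * u \<xi>"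
    using lower[of \<xi>] \<xi> by simp
  with \<open>0 < t\<close> have "0 \<le> (t - 0) * ((u' \<xi> + C * u \<xi>) * exp (C * \<xi>))"
    by simp
  with \<xi> \<open>0 < u 0\<close> have "0 < u t * exp (C * t)"
    by (simp add: v_def)
  then show ?thesis
    by (simp add: zero_less_mult_iff)
qed (use \<open>0 < u 0\<close> in simp)

lemma DERIV_comp_within_range:
  assumes "(H has_real_derivative H') (at (\<phi> t) within T)"
    and "(\<phi> has_real_derivative D) (at t within S)" and "\<phi> ` S \<subseteq> T"
  shows "((\<lambda>s. H (\<phi> s)) has_real_derivative H' * D) (at t within S)"
  using DERIV_image_chain[OF DERIV_subset[OF assms(1,3)] assms(2)] by (simp add: o_def)

lemma mono_on_imp_deriv_within_nonneg:
  fixes F :: "real \<Rightarrow> real"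
  assumes mono: "mono_on A F" and "c \<in> A" and "at c within A \<noteq> bot"
    and deriv: "(F has_real_derivative D) (at c within A)"
  shows "0 \<le> D"
proof (rule tendsto_lowerbound)
  show "((\<lambda>t. (F t - F c) / (t - c)) \<longlongrightarrow> D) (at c within A)"
    using deriv by (simp add: has_field_derivative_iff)
  show "eventually (\<lambda>t. 0 \<le> (F t - F c) / (t - c)) (at c within A)"
    unfolding eventually_at_filter
  proof (intro always_eventually allI impI)
    fix t assume "t \<noteq> c" "t \<in> A"
    then show "0 \<le> (F t - F c) / (t - c)"
      using mono_onD[OF mono] \<open>c \<in> A\<close> by (cases "t < c") (auto simp: zero_le_divide_iff)
  qed
qed fact

lemma concave_on_le_tangent:
  fixes F :: "real \<Rightarrow> real"
  assumes conc: "concave_on A F" and "connected A" and "c \<in> A" "x \<in> A"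
    and deriv: "(F has_real_derivative D) (at c within A)"
  shows "F x - F c \<le> D * (x - c)"
proof (cases x c rule: linorder_cases)
  case less
  have sub: "{x..c} \<subseteq> A"
    using connected_contains_Icc assms by blast
  then have "((\<lambda>t. (F t - F c) / (t - c)) \<longlongrightarrow> D) (at_left c)"
    using DERIV_subset[OF deriv sub] by (simp add: has_field_derivative_iff at_within_Icc_at_left less)
  moreover have "eventually (\<lambda>t. (F t - F c) / (t - c) \<le> (F x - F c) / (x - c)) (at_left c)"
    using eventually_at_left_real[OF less]
  proof eventually_elim
    fix t assume t: "t \<in> {x<..<c}"
    have "concave_on {x..c} F"
      using conc sub by (simp add: concave_on_def convex_on_subset)
    with t have "(F x - F c) / (c - x) * (c - t) + F c \<le> F t"
      by (intro concave_onD_Icc'') auto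
    with t less show "(F t - F c) / (t - c) \<le> (F x - F c) / (x - c)"
      by (simp add: field_split_simps)
  qed
  ultimately have "D \<le> (F x - F c) / (x - c)"
    by (rule tendsto_upperbound) simp
  with less show ?thesis
    by (simp add: field_split_simps)
next
  case greater
  have sub: "{c..x} \<subseteq> A"
    using connected_contains_Icc assms by blast
  then have "((\<lambda>t. (F t - F c) / (t - c)) \<longlongrightarrow> D) (at_right c)"
    using DERIV_subset[OF deriv sub] by (simp add: has_field_derivative_iff at_within_Icc_at_right greater)
  moreover have "eventually (\<lambda>t. (F x - F c) / (x - c) \<le> (F t - F c) / (t - c)) (at_right c)"
    using eventually_at_right_real[OF greater]
  proof eventually_elim
    fix t assume t: "t \<in> {c<..<x}"
    have "concave_on {c..x} F"
      using conc sub by (simp add: concave_on_def convex_on_subset)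
    with t have "(F x - F c) / (x - c) * (t - c) + F c \<le> F t"
      by (intro concave_onD_Icc') auto
    with t greater show "(F x - F c) / (x - c) \<le> (F t - F c) / (t - c)"
      by (simp add: field_split_simps)
  qed
  ultimately have "(F x - F c) / (x - c) \<le> D"
    by (rule tendsto_lowerbound) simp
  with greater show ?thesis
    by (simp add: field_split_simps)
qed simp

lemma eventually_opposite_increment_mult_le:
  fixes p y u :: "real \<Rightarrow> real"
  assumes y: "(y has_real_derivative u \<tau>) (at_right \<tau>)"
    and u: "(u has_real_derivative u') (at_right \<tau>)"
    and p: "(p \<longlongrightarrow> p \<tau>) (at_right \<tau>)"
    and opposite: "eventually (\<lambda>t. (p t - p \<tau>) * (y t - y \<tau>) \<le> 0) (at_right \<tau>)"
    and "0 < \<delta>"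
  shows "eventually (\<lambda>t. (p t - p \<tau>) * u t \<le> \<delta> * (t - \<tau>)) (at_right \<tau>)"
proof (cases "u \<tau> = 0")
  case False
  \<comment> \<open>Eventually u t and y t - y \<tau> both have the sign of u \<tau>, so the product is nonpositive.\<close>
  have "((\<lambda>t. u t * ((y t - y \<tau>) / (t - \<tau>))) \<longlongrightarrow> u \<tau> * u \<tau>) (at_right \<tau>)"
    using DERIV_continuous[OF u] y
    by (intro tendsto_mult) (simp_all add: continuous_within has_field_derivative_iff)
  moreover have "0 < u \<tau> * u \<tau>"
    using False by (metis linorder_neq_iff mult_neg_neg mult_pos_pos)
  ultimately have "eventually (\<lambda>t. 0 < u t * ((y t - y \<tau>) / (t - \<tau>))) (at_right \<tau>)"
    by (rule order_tendstoD)
  then show ?thesis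
    using opposite eventually_at_right_less
  proof eventually_elim
    case (elim t)
    then have pos: "0 < u t * (y t - y \<tau>)"
      by (simp add: zero_less_mult_iff zero_less_divide_iff)
    have "((p t - p \<tau>) * u t) * (u t * (y t - y \<tau>))
        = (u t)\<^sup>2 * ((p t - p \<tau>) * (y t - y \<tau>))"
      by (simp add: power2_eq_square algebra_simps)
    also have "\<dots> \<le> 0"
      by (rule mult_nonneg_nonpos[OF zero_le_power2 elim(2)])
    finally have "(p t - p \<tau>) * u t \<le> 0"
      using pos by (metis mult_pos_pos not_le)
    moreover have "0 \<le> \<delta> * (t - \<tau>)"
      using \<open>0 < \<delta>\<close> elim by simp
    ultimately show ?case
      by linarith
  qed
next
  case True
  \<comment> \<open>Now u t = O(t - \<tau>), while p t - p \<tau> tends to 0.\<close>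
  have "((\<lambda>t. (p t - p \<tau>) * ((u t - u \<tau>) / (t - \<tau>))) \<longlongrightarrow> (p \<tau> - p \<tau>) * u') (at_right \<tau>)"
    using p u by (intro tendsto_intros) (simp_all add: has_field_derivative_iff)
  then have "eventually (\<lambda>t. (p t - p \<tau>) * ((u t - u \<tau>) / (t - \<tau>)) < \<delta>) (at_right \<tau>)"
    using \<open>0 < \<delta>\<close> by (simp add: order_tendstoD)
  then show ?thesis
    using eventually_at_right_less
  proof eventually_elim
    case (elim t)
    then have "(p t - p \<tau>) * ((u t - u \<tau>) / (t - \<tau>)) * (t - \<tau>) \<le> \<delta> * (t - \<tau>)"
      by (intro mult_right_mono) auto
    with elim True show ?case
      by simp
  qed
qed

lemma right_dini_sum_mult_le:
  fixes p y u :: "'i \<Rightarrow> real \<Rightarrow> real" and u' :: "'i \<Rightarrow> real"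
  assumes "finite I" and "0 < \<epsilon>"
    and y: "\<And>j. j \<in> I \<Longrightarrow> (y j has_real_derivative u j \<tau>) (at_right \<tau>)"
    and u: "\<And>j. j \<in> I \<Longrightarrow> (u j has_real_derivative u' j) (at_right \<tau>)"
    and p: "\<And>j. j \<in> I \<Longrightarrow> (p j \<longlongrightarrow> p j \<tau>) (at_right \<tau>)"
    and opposite: "\<And>j. j \<in> I \<Longrightarrow>
          eventually (\<lambda>t. (p j t - p j \<tau>) * (y j t - y j \<tau>) \<le> 0) (at_right \<tau>)"
  shows "eventually (\<lambda>t. (\<Sum>j\<in>I. p j t * u j t) - (\<Sum>j\<in>I. p j \<tau> * u j \<tau>)
           \<le> (t - \<tau>) * ((\<Sum>j\<in>I. p j \<tau> * u' j) + \<epsilon>)) (at_right \<tau>)"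
proof -
  define \<delta> where "\<delta> = \<epsilon> / (2 * (card I + 1))"
  have "0 < \<delta>"
    using \<open>0 < \<epsilon>\<close> by (simp add: \<delta>_def)
  have small: "eventually (\<lambda>t. \<forall>j\<in>I. (p j t - p j \<tau>) * u j t \<le> \<delta> * (t - \<tau>)) (at_right \<tau>)"
    using \<open>finite I\<close> eventually_opposite_increment_mult_le[OF y u p opposite \<open>0 < \<delta>\<close>]
    by (simp add: eventually_ball_finite)
  have "((\<lambda>t. \<Sum>j\<in>I. p j \<tau> * ((u j t - u j \<tau>) / (t - \<tau>))) \<longlongrightarrow> (\<Sum>j\<in>I. p j \<tau> * u' j))
      (at_right \<tau>)"
    using u by (intro tendsto_intros) (simp add: has_field_derivative_iff)
  then have quotient: "eventually (\<lambda>t. (\<Sum>j\<in>I. p j \<tau> * ((u j t - u j \<tau>) / (t - \<tau>)))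
      < (\<Sum>j\<in>I. p j \<tau> * u' j) + \<epsilon> / 2) (at_right \<tau>)"
    using \<open>0 < \<epsilon>\<close> by (simp add: order_tendstoD)
  show ?thesis
    using small quotient eventually_at_right_less
  proof eventually_elim
    case (elim t)
    have "(\<Sum>j\<in>I. p j t * u j t) - (\<Sum>j\<in>I. p j \<tau> * u j \<tau>)
        = (\<Sum>j\<in>I. p j \<tau> * (u j t - u j \<tau>)) + (\<Sum>j\<in>I. (p j t - p j \<tau>) * u j t)"
      by (simp add: sum_subtractf[symmetric] sum.distrib[symmetric] algebra_simps)
    moreover have "(\<Sum>j\<in>I. p j \<tau> * (u j t - u j \<tau>))
        = (t - \<tau>) * (\<Sum>j\<in>I. p j \<tau> * ((u j t - u j \<tau>) / (t - \<tau>)))"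
      unfolding sum_distrib_left using elim(3) by (intro sum.cong) auto
    moreover have "(t - \<tau>) * (\<Sum>j\<in>I. p j \<tau> * ((u j t - u j \<tau>) / (t - \<tau>)))
        \<le> (t - \<tau>) * ((\<Sum>j\<in>I. p j \<tau> * u' j) + \<epsilon> / 2)"
      using elim by (intro mult_left_mono) auto
    moreover have "(\<Sum>j\<in>I. (p j t - p j \<tau>) * u j t) \<le> card I * (\<delta> * (t - \<tau>))"
      using elim(1) sum_mono[of I "\<lambda>j. (p j t - p j \<tau>) * u j t" "\<lambda>_. \<delta> * (t - \<tau>)"] by simp
    moreover have "card I * (\<delta> * (t - \<tau>)) \<le> (t - \<tau>) * (\<epsilon> / 2)"
      using \<open>0 < \<epsilon>\<close> elim(3) by (simp add: \<delta>_def field_simps)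
    moreover have "(t - \<tau>) * ((\<Sum>j\<in>I. p j \<tau> * u' j) + \<epsilon>)
        = (t - \<tau>) * ((\<Sum>j\<in>I. p j \<tau> * u' j) + \<epsilon> / 2) + (t - \<tau>) * (\<epsilon> / 2)"
      by (simp add: algebra_simps)
    ultimately show ?case
      by linarith
  qed
qed

lemma nonpos_at_end_by_right_steps:
  fixes \<phi> :: "real \<Rightarrow> real"
  assumes "continuous_on {c..d} \<phi>" and "c \<le> d" "\<phi> c \<le> 0"
    and step: "\<And>s. s \<in> {c..<d} \<Longrightarrow> \<phi> s \<le> 0 \<Longrightarrow> \<exists>t\<in>{s<..d}. \<phi> t \<le> 0"
  shows "\<phi> d \<le> 0"
proof -
  let ?A = "{c..d} \<inter> \<phi> -` {..0}"
  have "compact ?A"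
    using continuous_closed_preimage[OF assms(1)]
    by (simp add: compact_eq_bounded_closed bounded_Int)
  moreover have "c \<in> ?A"
    using assms by simp
  ultimately obtain s where s: "s \<in> ?A" and last: "\<forall>t\<in>?A. t \<le> s"
    using compact_attains_sup by blast
  have "s = d"
  proof (rule ccontr)
    assume "s \<noteq> d"
    with s step[of s] obtain t where t: "t \<in> {s<..d}" "\<phi> t \<le> 0"
      by auto
    with s have "t \<in> ?A"
      by auto
    with last t show False
      by force
  qed
  with s show ?thesis
    by simp
qed

lemma eventually_below_exp_barrier:
  fixes v :: "real \<Rightarrow> real"
  assumes "0 < a" and bound: "eventually (\<lambda>t. v t - a \<le> (t - s) * (M * a + a / 2)) (at_right s)"
  shows "eventually (\<lambda>t. v t < a * exp ((M + 1) * (t - s))) (at_right s)"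
  using bound eventually_at_right_less
proof eventually_elim
  case (elim t)
  have "a * (1 + (M + 1) * (t - s)) \<le> a * exp ((M + 1) * (t - s))"
    using \<open>0 < a\<close> exp_ge_add_one_self[of "(M + 1) * (t - s)"] by (intro mult_left_mono) auto
  moreover have "a * (1 + (M + 1) * (t - s)) = a + (t - s) * (M * a + a)"
    by (simp add: algebra_simps)
  moreover have "(t - s) * (M * a + a / 2) < (t - s) * (M * a + a)"
    using \<open>0 < a\<close> elim(2) by simp
  ultimately show ?case
    using elim(1) by linarith
qed

lemma right_dini_gronwall_nonpos:
  fixes v :: "real \<Rightarrow> real"
  assumes "c \<le> d" and cont: "continuous_on {c..d} v" and "v c \<le> 0"
    and dini: "\<And>\<tau> \<epsilon>. \<tau> \<in> {c..<d} \<Longrightarrow> 0 < v \<tau> \<Longrightarrow> 0 < \<epsilon> \<Longrightarrow>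
       eventually (\<lambda>t. v t - v \<tau> \<le> (t - \<tau>) * (M * v \<tau> + \<epsilon>)) (at_right \<tau>)"
  shows "v d \<le> 0"
proof (rule ccontr)
  assume "\<not> v d \<le> 0"
  \<comment> \<open>The barrier \<eta> E grows faster than the Dini bound lets v grow, so v cannot overtake it.\<close>
  define E where "E t = exp ((M + 1) * (t - c))" for t
  define \<eta> where "\<eta> = v d / (2 * E d)"
  define \<phi> where "\<phi> t = v t - \<eta> * E t" for t
  have E_pos: "0 < E t" for t
    by (simp add: E_def)
  have "0 < \<eta>"
    using \<open>\<not> v d \<le> 0\<close> E_pos[of d] by (simp add: \<eta>_def)
  have "\<phi> d \<le> 0"
  proof (rule nonpos_at_end_by_right_steps[where c = c and d = d and \<phi> = \<phi>])
    show "continuous_on {c..d} \<phi>"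
      unfolding \<phi>_def E_def by (intro continuous_intros cont)
    show "\<phi> c \<le> 0"
      using \<open>v c \<le> 0\<close> \<open>0 < \<eta>\<close> by (simp add: \<phi>_def E_def)
    fix s assume s: "s \<in> {c..<d}" "\<phi> s \<le> 0"
    have "eventually (\<lambda>t. \<phi> t < 0) (at_right s)"
    proof (cases "\<phi> s < 0")
      case True
      have "continuous_on {s..d} \<phi>"
        using \<open>continuous_on {c..d} \<phi>\<close> by (rule continuous_on_subset) (use s in auto)
      then have "(\<phi> \<longlongrightarrow> \<phi> s) (at_right s)"
        using s by (auto simp: continuous_on_Icc_at_rightD)
      with True show ?thesis
        by (simp add: order_tendstoD)
    next
      case False
      define a where "a = \<eta> * E s"
      have "0 < a" "v s = a"
        using False s \<open>0 < \<eta>\<close> E_pos[of s] by (auto simp: a_def \<phi>_def)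
      with dini[of s "a / 2"] s
      have "eventually (\<lambda>t. v t - a \<le> (t - s) * (M * a + a / 2)) (at_right s)"
        by simp
      then have "eventually (\<lambda>t. v t < a * exp ((M + 1) * (t - s))) (at_right s)"
        by (rule eventually_below_exp_barrier[OF \<open>0 < a\<close>])
      moreover have "a * exp ((M + 1) * (t - s)) = \<eta> * E t" for t
        unfolding a_def E_def by (simp add: algebra_simps flip: exp_add)
      ultimately show ?thesis
        by (simp add: \<phi>_def)
    qed
    moreover have "eventually (\<lambda>t. t \<in> {s<..<d}) (at_right s)"
      using s by (intro eventually_at_right_real) simp
    ultimately have "eventually (\<lambda>t. \<phi> t < 0 \<and> t \<in> {s<..<d}) (at_right s)"
      by (rule eventually_conj)
    then obtain t where "\<phi> t < 0" "t \<in> {s<..<d}"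
      using eventually_happens'[of "at_right s"] by auto
    then show "\<exists>t\<in>{s<..d}. \<phi> t \<le> 0"
      by force
  qed fact
  moreover have "\<phi> d = v d / 2"
    using E_pos[of d] by (simp add: \<phi>_def \<eta>_def)
  ultimately show False
    using \<open>\<not> v d \<le> 0\<close> by simp
qed

lemma continuous_on_first_nonpos:
  fixes \<phi> :: "real \<Rightarrow> real"
  assumes "continuous_on {a..b} \<phi>" and "0 < \<phi> a" "\<phi> b \<le> 0" "a \<le> b"
  obtains c where "a < c" "c \<le> b" "\<phi> c \<le> 0" "\<And>r. a \<le> r \<Longrightarrow> r < c \<Longrightarrow> 0 < \<phi> r"
proof -
  let ?A = "{a..b} \<inter> \<phi> -` {..0}"
  have "compact ?A"
    using continuous_closed_preimage[OF assms(1)]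
    by (simp add: compact_eq_bounded_closed bounded_Int)
  moreover have "b \<in> ?A"
    using assms by simp
  ultimately obtain c where c: "c \<in> ?A" and first: "\<forall>r\<in>?A. c \<le> r"
    using compact_attains_inf by blast
  have "a < c"
    using c \<open>0 < \<phi> a\<close> by (cases "c = a") auto
  moreover have "0 < \<phi> r" if "a \<le> r" "r < c" for r
  proof (rule ccontr)
    assume "\<not> 0 < \<phi> r"
    with that c have "r \<in> ?A"
      by auto
    with first have "c \<le> r"
      by blast
    with \<open>r < c\<close> show False
      by simp
  qed
  ultimately show ?thesis
    using c that by auto
qed

lemma at_within_unit_interval_nontrivial: "s \<in> {0..1} \<Longrightarrow> at s within {0..1::real} \<noteq> bot"
  using trivial_limit_within[of s "{0..1::real}"] islimpt_Icc[of 0 1 s]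
  by (simp add: trivial_limit_def)

locale rank_one_sir =
  fixes n :: nat and \<gamma> :: real
    and g f g' f' :: "nat \<Rightarrow> real \<Rightarrow> real"
    and x y :: "real \<Rightarrow> nat \<Rightarrow> real"
  assumes gamma_pos: "0 < \<gamma>"
    and g_deriv: "\<And>i s. i < n \<Longrightarrow> s \<in> {0..1} \<Longrightarrow>
          (g i has_real_derivative g' i s) (at s within {0..1})"
    and f_deriv: "\<And>j s. j < n \<Longrightarrow> s \<in> {0..1} \<Longrightarrow>
          (f j has_real_derivative f' j s) (at s within {0..1})"
    and f'_cont: "\<And>j. j < n \<Longrightarrow> continuous_on {0..1} (f' j)"
    and g_pos: "\<And>i s. i < n \<Longrightarrow> s \<in> {0..1} \<Longrightarrow> 0 < g i s"
    and f_pos: "\<And>j s. j < n \<Longrightarrow> s \<in> {0..1} \<Longrightarrow> 0 < f j s"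
    and xg_strict_mono: "\<And>i. i < n \<Longrightarrow> strict_mono_on {0..1} (\<lambda>s. s * g i s)"
    and fy_strict_mono: "\<And>j. j < n \<Longrightarrow> strict_mono_on {0..1} (\<lambda>s. f j s * s)"
    and fy_concave: "\<And>j. j < n \<Longrightarrow> concave_on {0..1} (\<lambda>s. f j s * s)"
    and sol_in_S: "\<And>t. 0 \<le> t \<Longrightarrow> (x t, y t) \<in> S_set n"
    and ode_x: "\<And>t i. 0 \<le> t \<Longrightarrow> i < n \<Longrightarrow> ((\<lambda>s. x s i) has_real_derivative
          - x t i * g i (x t i) * ybar n f (y t)) (at t within {0..})"
    and ode_y: "\<And>t i. 0 \<le> t \<Longrightarrow> i < n \<Longrightarrow> ((\<lambda>s. y s i) has_real_derivative
          x t i * g i (x t i) * ybar n f (y t) - \<gamma> * y t i) (at t within {0..})"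
    and x0_pos: "\<exists>i<n. 0 < x 0 i"
    and y0_pos: "\<exists>i<n. 0 < y 0 i"
begin

definition F :: "nat \<Rightarrow> real \<Rightarrow> real" where "F j s = f j s * s"
definition F' :: "nat \<Rightarrow> real \<Rightarrow> real" where "F' j s = f' j s * s + f j s"
definition G :: "nat \<Rightarrow> real \<Rightarrow> real" where "G i s = s * g i s"
definition G' :: "nat \<Rightarrow> real \<Rightarrow> real" where "G' i s = g i s + s * g' i s"

lemma F_deriv: "j < n \<Longrightarrow> s \<in> {0..1} \<Longrightarrow> (F j has_real_derivative F' j s) (at s within {0..1})"
  unfolding F_def[abs_def] F'_def by (auto intro!: derivative_eq_intros f_deriv)

lemma G_deriv: "i < n \<Longrightarrow> s \<in> {0..1} \<Longrightarrow> (G i has_real_derivative G' i s) (at s within {0..1})"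
  unfolding G_def[abs_def] G'_def by (auto intro!: derivative_eq_intros g_deriv simp: mult.commute)

lemma F'_cont: "j < n \<Longrightarrow> continuous_on {0..1} (F' j)"
  unfolding F'_def[abs_def]
  using f'_cont DERIV_continuous_on[OF f_deriv] by (auto intro!: continuous_intros)

lemma g_cont: "i < n \<Longrightarrow> continuous_on {0..1} (g i)"
  using DERIV_continuous_on[OF g_deriv] by auto

lemma F_strict_mono: "j < n \<Longrightarrow> strict_mono_on {0..1} (F j)"
  using fy_strict_mono by (simp add: F_def[abs_def])

lemma G_strict_mono: "i < n \<Longrightarrow> strict_mono_on {0..1} (G i)"
  using xg_strict_mono by (simp add: G_def[abs_def])

lemma F_concave: "j < n \<Longrightarrow> concave_on {0..1} (F j)"
  using fy_concave by (simp add: F_def[abs_def])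

lemma F'_nonneg: "j < n \<Longrightarrow> s \<in> {0..1} \<Longrightarrow> 0 \<le> F' j s"
  by (rule mono_on_imp_deriv_within_nonneg[OF strict_mono_on_imp_mono_on[OF F_strict_mono]
        _ at_within_unit_interval_nontrivial F_deriv])

lemma G'_nonneg: "i < n \<Longrightarrow> s \<in> {0..1} \<Longrightarrow> 0 \<le> G' i s"
  by (rule mono_on_imp_deriv_within_nonneg[OF strict_mono_on_imp_mono_on[OF G_strict_mono]
        _ at_within_unit_interval_nontrivial G_deriv])

lemma F_le_tangent:
  "j < n \<Longrightarrow> a \<in> {0..1} \<Longrightarrow> b \<in> {0..1} \<Longrightarrow> F j b - F j a \<le> F' j a * (b - a)"
  by (rule concave_on_le_tangent[OF F_concave _ _ _ F_deriv]) (auto intro: convex_connected)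

lemma F'_antimono:
  assumes "j < n" "a \<in> {0..1}" "b \<in> {0..1}"
  shows "(F' j a - F' j b) * (a - b) \<le> 0"
  using F_le_tangent[OF assms] F_le_tangent[OF assms(1,3,2)] by (simp add: algebra_simps)

lemma F'_pos:
  assumes "j < n" "0 \<le> s" "s < 1"
  shows "0 < F' j s"
proof -
  have "F j s < F j 1"
    using F_strict_mono[OF \<open>j < n\<close>] assms by (auto simp: strict_mono_on_def)
  with F_le_tangent[of j s 1] assms have "0 < F' j s * (1 - s)"
    by simp
  with \<open>s < 1\<close> show ?thesis
    by (simp add: zero_less_mult_iff)
qed

lemma F_le_linear: "j < n \<Longrightarrow> s \<in> {0..1} \<Longrightarrow> F j s \<le> F' j 0 * s"
  using F_le_tangent[of j 0 s] by (simp add: F_def)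

definition Y :: "real \<Rightarrow> real" where "Y t = ybar n f (y t)"
definition H :: "nat \<Rightarrow> real \<Rightarrow> real" where "H i t = G i (x t i)"
definition U :: "nat \<Rightarrow> real \<Rightarrow> real" where "U i t = H i t * Y t - \<gamma> * y t i"
definition P :: "nat \<Rightarrow> real \<Rightarrow> real" where "P j t = F' j (y t j)"
definition W :: "real \<Rightarrow> real" where "W t = (\<Sum>j<n. P j t * U j t)"
definition H' :: "nat \<Rightarrow> real \<Rightarrow> real" where "H' i t = - G' i (x t i) * H i t * Y t"
definition U' :: "nat \<Rightarrow> real \<Rightarrow> real" where "U' i t = H' i t * Y t + H i t * W t - \<gamma> * U i t"

lemma state_bounds:
  assumes "0 \<le> t" "i < n"
  shows "0 \<le> x t i" "x t i \<le> 1" "0 \<le> y t i" "y t i \<le> 1" "x t i + y t i \<le> 1"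
  using sol_in_S[OF assms(1)] assms(2) by (auto simp: S_set_def)

lemma Y_eq_sum_F: "Y t = (\<Sum>j<n. F j (y t j))"
  by (simp add: Y_def ybar_def F_def)

lemma x_deriv: "0 \<le> t \<Longrightarrow> i < n \<Longrightarrow>
    ((\<lambda>s. x s i) has_real_derivative - H i t * Y t) (at t within {0..})"
  using ode_x by (simp add: H_def G_def Y_def)

lemma y_deriv: "0 \<le> t \<Longrightarrow> i < n \<Longrightarrow> ((\<lambda>s. y s i) has_real_derivative U i t) (at t within {0..})"
  using ode_y by (simp add: U_def H_def G_def Y_def)

lemma Y_deriv:
  assumes "0 \<le> t"
  shows "(Y has_real_derivative W t) (at t within {0..})"
proof -
  have "((\<lambda>s. F j (y s j)) has_real_derivative P j t * U j t) (at t within {0..})" if "j < n" for j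
    unfolding P_def using that assms state_bounds
    by (intro DERIV_comp_within_range[OF F_deriv y_deriv[OF assms]]) auto
  then show ?thesis
    unfolding Y_eq_sum_F[abs_def] W_def by (intro DERIV_sum) auto
qed

lemma H_deriv:
  assumes "0 \<le> t" "i < n"
  shows "(H i has_real_derivative H' i t) (at t within {0..})"
proof -
  have "((\<lambda>s. G i (x s i)) has_real_derivative G' i (x t i) * (- H i t * Y t)) (at t within {0..})"
    using assms state_bounds by (intro DERIV_comp_within_range[OF G_deriv x_deriv]) auto
  then show ?thesis
    by (simp add: H_def[abs_def] H'_def mult.assoc)
qed

lemma U_deriv:
  assumes "0 \<le> t" "i < n"
  shows "(U i has_real_derivative U' i t) (at t within {0..})"
proof -
  have "((\<lambda>s. H i s * Y s - \<gamma> * y s i) has_real_derivative U' i t) (at t within {0..})"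
    unfolding U'_def using H_deriv[OF assms] Y_deriv[OF assms(1)] y_deriv[OF assms]
    by (auto intro!: derivative_eq_intros simp: algebra_simps)
  then show ?thesis
    by (simp add: U_def[abs_def])
qed

lemma P_cont: "j < n \<Longrightarrow> continuous_on {0..} (P j)"
  unfolding P_def[abs_def] using state_bounds
  by (intro continuous_on_compose2[OF F'_cont DERIV_continuous_on[OF y_deriv]]) auto

lemma W_cont: "continuous_on {0..} W"
  unfolding W_def[abs_def] using P_cont DERIV_continuous_on[OF U_deriv]
  by (auto intro!: continuous_intros)

lemma F_nonneg: "j < n \<Longrightarrow> s \<in> {0..1} \<Longrightarrow> 0 \<le> F j s"
  using f_pos[of j s] by (simp add: F_def)

lemma Y_nonneg: "0 \<le> t \<Longrightarrow> 0 \<le> Y t"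
  unfolding Y_eq_sum_F using F_nonneg state_bounds by (auto intro: sum_nonneg)

lemma H_nonneg: "0 \<le> t \<Longrightarrow> i < n \<Longrightarrow> 0 \<le> H i t"
  using g_pos[of i "x t i"] state_bounds[of t i] by (simp add: H_def G_def)

lemma P_nonneg: "0 \<le> t \<Longrightarrow> j < n \<Longrightarrow> 0 \<le> P j t"
  using F'_nonneg state_bounds by (simp add: P_def)

lemma H'_nonpos: "0 \<le> t \<Longrightarrow> i < n \<Longrightarrow> H' i t \<le> 0"
  using G'_nonneg[of i "x t i"] state_bounds[of t i] H_nonneg[of t i] Y_nonneg[of t]
  by (simp add: H'_def)

lemma Y_le_linear:
  assumes "0 \<le> t"
  shows "Y t \<le> (\<Sum>k<n. F' k 0) * (\<Sum>j<n. y t j)"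
proof -
  have "F j (y t j) \<le> (\<Sum>k<n. F' k 0) * y t j" if "j < n" for j
  proof -
    have "F' j 0 \<le> (\<Sum>k<n. F' k 0)"
      using that F'_nonneg by (intro member_le_sum) auto
    then have "F' j 0 * y t j \<le> (\<Sum>k<n. F' k 0) * y t j"
      using state_bounds[OF assms that] by (intro mult_right_mono) auto
    with F_le_linear[OF that] show ?thesis
      using state_bounds[OF assms that] by force
  qed
  then show ?thesis
    unfolding Y_eq_sum_F sum_distrib_left by (intro sum_mono) auto
qed

lemma y_pos:
  assumes "i < n" "0 < y 0 i" "0 \<le> t"
  shows "0 < y t i"
proof (rule pos_if_deriv_ge_linear[where u = "\<lambda>s. y s i" and C = \<gamma>])
  fix s :: real assume "0 \<le> s"
  then show "((\<lambda>s. y s i) has_real_derivative U i s) (at s within {0..})"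
    by (rule y_deriv[OF _ \<open>i < n\<close>])
  show "- \<gamma> * y s i \<le> U i s"
    using H_nonneg[OF \<open>0 \<le> s\<close> \<open>i < n\<close>] Y_nonneg[OF \<open>0 \<le> s\<close>] by (simp add: U_def)
qed (use assms in auto)

lemma Y_pos: "0 \<le> t \<Longrightarrow> 0 < Y t"
proof -
  assume "0 \<le> t"
  obtain k where k: "k < n" "0 < y 0 k"
    using y0_pos by blast
  then have "0 < F k (y t k)"
    using y_pos[OF k \<open>0 \<le> t\<close>] f_pos[of k "y t k"] state_bounds[OF \<open>0 \<le> t\<close> k(1)]
    by (simp add: F_def)
  also have "F k (y t k) \<le> Y t"
    unfolding Y_eq_sum_F using k F_nonneg state_bounds[OF \<open>0 \<le> t\<close>]
    by (intro member_le_sum) auto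
  finally show ?thesis .
qed

lemma x_pos:
  assumes "i < n" "0 < x 0 i" "0 \<le> t"
  shows "0 < x t i"
proof -
  obtain c where "c \<in> {0..1}" and c_max: "\<forall>s\<in>{0..1}. g i s \<le> g i c"
    using continuous_attains_sup[OF compact_Icc _ g_cont] \<open>i < n\<close> by fastforce
  define C where "C = g i c * ((\<Sum>k<n. F' k 0) * n)"
  show ?thesis
  proof (rule pos_if_deriv_ge_linear[where u = "\<lambda>s. x s i" and C = C])
    fix s :: real assume "0 \<le> s"
    then show "((\<lambda>s. x s i) has_real_derivative - H i s * Y s) (at s within {0..})"
      by (rule x_deriv[OF _ \<open>i < n\<close>])
    have "(\<Sum>j<n. y s j) \<le> n"
      using sum_mono[of "{..<n}" "\<lambda>j. y s j" "\<lambda>_. 1"] state_bounds[OF \<open>0 \<le> s\<close>] by simp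
    moreover have "0 \<le> (\<Sum>k<n. F' k 0)"
      using F'_nonneg by (auto intro: sum_nonneg)
    ultimately have Y_le: "Y s \<le> (\<Sum>k<n. F' k 0) * n"
      using Y_le_linear[OF \<open>0 \<le> s\<close>] mult_left_mono by (meson order_trans)
    have "0 < g i c"
      using g_pos \<open>i < n\<close> \<open>c \<in> {0..1}\<close> by blast
    with Y_le have "g i (x s i) * Y s \<le> C"
      unfolding C_def using c_max Y_nonneg[OF \<open>0 \<le> s\<close>] state_bounds[OF \<open>0 \<le> s\<close> \<open>i < n\<close>]
      by (intro mult_mono) auto
    then have "g i (x s i) * Y s * x s i \<le> C * x s i"
      using state_bounds[OF \<open>0 \<le> s\<close> \<open>i < n\<close>] by (intro mult_right_mono) auto
    then show "- C * x s i \<le> - H i s * Y s"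
      by (simp add: H_def G_def algebra_simps)
  qed (use assms in auto)
qed

lemma x_strict_anti:
  assumes "i < n" "0 < x 0 i" "0 \<le> s" "s < t"
  shows "x t i < x s i"
proof -
  obtain \<xi> where \<xi>: "s < \<xi>" "x t i - x s i = (t - s) * (- H i \<xi> * Y \<xi>)"
    using mvt_half_line[OF x_deriv[OF _ \<open>i < n\<close>] \<open>0 \<le> s\<close> \<open>s < t\<close>] by blast
  have "0 < H i \<xi>"
    using x_pos[OF assms(1,2)] g_pos[OF \<open>i < n\<close>] state_bounds[of \<xi> i] \<xi> assms
    by (simp add: H_def G_def)
  with Y_pos[of \<xi>] \<xi> assms have "0 < (t - s) * (H i \<xi> * Y \<xi>)"
    by simp
  with \<xi> show ?thesis
    by simp
qed

lemma H_strict_anti: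
  assumes "i < n" "0 < x 0 i" "0 \<le> s" "s < t"
  shows "H i t < H i s"
proof -
  have "x t i \<in> {0..1}" "x s i \<in> {0..1}"
    using state_bounds[of t i] state_bounds[of s i] assms by auto
  then show ?thesis
    unfolding H_def using x_strict_anti[OF assms]
    by (rule strict_mono_onD[OF G_strict_mono[OF \<open>i < n\<close>]])
qed

text \<open>K bounds the upper right Dini derivative of W, which need not be differentiable since f' is
  only continuous.\<close>

definition K :: "real \<Rightarrow> real" where
  "K t = Y t * (\<Sum>j<n. P j t * H' j t) + ((\<Sum>j<n. P j t * H j t) - \<gamma>) * W t"

lemma W_right_dini:
  assumes "0 \<le> \<tau>" "0 < \<epsilon>"
  shows "eventually (\<lambda>t. W t - W \<tau> \<le> (t - \<tau>) * (K \<tau> + \<epsilon>)) (at_right \<tau>)"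
proof -
  have right: "{\<tau><..} \<subseteq> {0..}"
    using assms by auto
  have "eventually (\<lambda>t. W t - W \<tau> \<le> (t - \<tau>) * ((\<Sum>j<n. P j \<tau> * U' j \<tau>) + \<epsilon>)) (at_right \<tau>)"
    unfolding W_def
  proof (rule right_dini_sum_mult_le[where y = "\<lambda>j s. y s j"])
    fix j assume "j \<in> {..<n}"
    then have j: "j < n"
      by simp
    show "((\<lambda>s. y s j) has_real_derivative U j \<tau>) (at_right \<tau>)"
      using DERIV_subset[OF y_deriv[OF assms(1) j] right] .
    show "(U j has_real_derivative U' j \<tau>) (at_right \<tau>)"
      using DERIV_subset[OF U_deriv[OF assms(1) j] right] .
    show "(P j \<longlongrightarrow> P j \<tau>) (at_right \<tau>)"
      using P_cont[OF j] assms(1) right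
      by (auto simp: continuous_on_def intro: tendsto_within_subset)
    show "eventually (\<lambda>t. (P j t - P j \<tau>) * (y t j - y \<tau> j) \<le> 0) (at_right \<tau>)"
      using eventually_at_right_less
    proof eventually_elim
      case (elim t)
      then show ?case
        unfolding P_def using F'_antimono[OF j] state_bounds[OF _ j] assms(1) by simp
    qed
  qed (use assms in auto)
  moreover have "(\<Sum>j<n. P j \<tau> * U' j \<tau>)
      = Y \<tau> * (\<Sum>j<n. P j \<tau> * H' j \<tau>) + W \<tau> * (\<Sum>j<n. P j \<tau> * H j \<tau>)
        - \<gamma> * (\<Sum>j<n. P j \<tau> * U j \<tau>)"
    unfolding U'_def by (simp add: sum.distrib sum_subtractf sum_distrib_left algebra_simps)
  then have "(\<Sum>j<n. P j \<tau> * U' j \<tau>) = K \<tau>"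
    unfolding K_def W_def[of \<tau>, symmetric] by (simp add: algebra_simps)
  ultimately show ?thesis
    by simp
qed

lemma P_le: "0 \<le> t \<Longrightarrow> j < n \<Longrightarrow> P j t \<le> F' j 0"
  using F'_antimono[of j "y t j" 0] state_bounds[of t j]
  by (cases "y t j = 0") (auto simp: P_def mult_le_0_iff)

lemma K_le:
  assumes "0 \<le> t" "0 \<le> W t"
  shows "K t \<le> (\<Sum>j<n. F' j 0 * G j 1) * W t"
proof -
  have "P j t * H j t \<le> F' j 0 * G j 1" if "j < n" for j
  proof (rule mult_mono)
    show "H j t \<le> G j 1"
      using strict_mono_on_imp_mono_on[OF G_strict_mono[OF that]] state_bounds[OF assms(1) that]
      by (simp add: H_def mono_on_def)
  qed (use P_le P_nonneg H_nonneg F'_nonneg assms that in auto)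
  then have "(\<Sum>j<n. P j t * H j t) \<le> (\<Sum>j<n. F' j 0 * G j 1)"
    by (intro sum_mono) simp
  then have "(\<Sum>j<n. P j t * H j t) - \<gamma> \<le> (\<Sum>j<n. F' j 0 * G j 1)"
    using gamma_pos by linarith
  then have "((\<Sum>j<n. P j t * H j t) - \<gamma>) * W t \<le> (\<Sum>j<n. F' j 0 * G j 1) * W t"
    using assms(2) by (rule mult_right_mono)
  moreover have "Y t * (\<Sum>j<n. P j t * H' j t) \<le> 0"
    using Y_nonneg[OF assms(1)] P_nonneg[OF assms(1)] H'_nonpos[OF assms(1)]
    by (auto intro!: mult_nonneg_nonpos sum_nonpos)
  ultimately show ?thesis
    unfolding K_def by linarith
qed

lemma W_nonpos_after:
  assumes "0 \<le> t\<^sub>0" "W t\<^sub>0 \<le> 0" "t\<^sub>0 \<le> t"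
  shows "W t \<le> 0"
proof (rule right_dini_gronwall_nonpos[where v = W and c = t\<^sub>0 and d = t
      and M = "\<Sum>j<n. F' j 0 * G j 1"])
  show "continuous_on {t\<^sub>0..t} W"
    using W_cont by (rule continuous_on_subset) (use assms in auto)
  fix \<tau> \<epsilon> :: real assume \<tau>: "\<tau> \<in> {t\<^sub>0..<t}" "0 < W \<tau>" and "0 < \<epsilon>"
  then have "0 \<le> \<tau>"
    using assms(1) by simp
  show "eventually (\<lambda>s. W s - W \<tau> \<le> (s - \<tau>) * ((\<Sum>j<n. F' j 0 * G j 1) * W \<tau> + \<epsilon>)) (at_right \<tau>)"
    using W_right_dini[OF \<open>0 \<le> \<tau>\<close> \<open>0 < \<epsilon>\<close>] eventually_at_right_less[of \<tau>]
  proof eventually_elim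
    case (elim s)
    have "K \<tau> \<le> (\<Sum>j<n. F' j 0 * G j 1) * W \<tau>"
      using K_le \<tau> \<open>0 \<le> \<tau>\<close> by simp
    then have "(s - \<tau>) * (K \<tau> + \<epsilon>) \<le> (s - \<tau>) * ((\<Sum>j<n. F' j 0 * G j 1) * W \<tau> + \<epsilon>)"
      using elim(2) by (intro mult_left_mono) auto
    with elim(1) show ?case
      by linarith
  qed
qed (use assms in auto)

lemma Y_anti_after:
  assumes "0 \<le> t\<^sub>0" "W t\<^sub>0 \<le> 0" "t\<^sub>0 \<le> s" "s \<le> t"
  shows "Y t \<le> Y s"
proof (cases "s = t")
  case False
  with assms have "0 \<le> s" "s < t"
    by auto
  then obtain \<xi> where \<xi>: "s < \<xi>" "\<xi> < t" "Y t - Y s = (t - s) * W \<xi>"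
    using mvt_half_line[OF Y_deriv] by blast
  have "W \<xi> \<le> 0"
    using W_nonpos_after[OF assms(1,2)] \<xi> assms by simp
  with \<open>s < t\<close> have "(t - s) * W \<xi> \<le> 0"
    by (simp add: mult_nonneg_nonpos)
  with \<xi> show ?thesis
    by simp
qed simp

lemma K_nonneg_where_W_vanishes:
  assumes "0 \<le> r" "r < t" and W_zero: "\<forall>q\<in>{r..<t}. W q = 0"
  shows "0 \<le> K r"
proof (rule ccontr)
  assume "\<not> 0 \<le> K r"
  then have "eventually (\<lambda>q. W q - W r \<le> (q - r) * (K r / 2)) (at_right r)"
    using W_right_dini[OF \<open>0 \<le> r\<close>, of "- K r / 2"] by simp
  moreover have "eventually (\<lambda>q. q \<in> {r<..<t}) (at_right r)"
    using \<open>r < t\<close> by (rule eventually_at_right_real)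
  ultimately have "eventually (\<lambda>q. W q - W r \<le> (q - r) * (K r / 2) \<and> q \<in> {r<..<t}) (at_right r)"
    by (rule eventually_conj)
  then obtain q where "W q - W r \<le> (q - r) * (K r / 2)" "q \<in> {r<..<t}"
    using eventually_happens'[of "at_right r"] by auto
  moreover have "(q - r) * (K r / 2) < 0"
    using \<open>\<not> 0 \<le> K r\<close> \<open>q \<in> {r<..<t}\<close> by (simp add: mult_pos_neg)
  ultimately show False
    using W_zero \<open>r < t\<close> by auto
qed

lemma H'_zero_where_W_vanishes:
  assumes "0 \<le> s" and W_zero: "\<forall>r\<in>{s<..<t}. W r = 0" and r: "r \<in> {s<..<t}"
    and "i < n" "0 < x 0 i"
  shows "H' i r = 0"
proof -
  have "0 \<le> r"
    using assms by simp
  have "0 \<le> K r"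
    using K_nonneg_where_W_vanishes[of r t] W_zero r \<open>0 \<le> r\<close> by simp
  then have "0 \<le> Y r * (\<Sum>j<n. P j r * H' j r)"
    using W_zero r by (simp add: K_def)
  then have "0 \<le> (\<Sum>j<n. P j r * H' j r)"
    using Y_pos[OF \<open>0 \<le> r\<close>] by (simp add: zero_le_mult_iff)
  moreover have terms_nonpos: "P j r * H' j r \<le> 0" if "j < n" for j
    using P_nonneg[OF \<open>0 \<le> r\<close> that] H'_nonpos[OF \<open>0 \<le> r\<close> that] by (rule mult_nonneg_nonpos)
  moreover have "(\<Sum>j<n. P j r * H' j r) \<le> 0"
    using terms_nonpos by (auto intro: sum_nonpos)
  ultimately have "(\<Sum>j<n. - (P j r * H' j r)) = 0"
    by (simp add: sum_negf)
  then have "P i r * H' i r = 0"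
    using sum_nonneg_eq_0_iff[of "{..<n}" "\<lambda>j. - (P j r * H' j r)"] terms_nonpos \<open>i < n\<close> by simp
  moreover have "0 < P i r"
  proof -
    have "y r i < 1"
      using x_pos[OF \<open>i < n\<close> \<open>0 < x 0 i\<close> \<open>0 \<le> r\<close>] state_bounds[OF \<open>0 \<le> r\<close> \<open>i < n\<close>] by simp
    then show ?thesis
      unfolding P_def using F'_pos[OF \<open>i < n\<close>] state_bounds[OF \<open>0 \<le> r\<close> \<open>i < n\<close>] by simp
  qed
  ultimately show ?thesis
    by simp
qed

lemma Y_strict_anti_after:
  assumes "0 \<le> t\<^sub>0" "W t\<^sub>0 \<le> 0" "t\<^sub>0 \<le> s" "s < t"
  shows "Y t < Y s"
proof (rule ccontr)
  assume "\<not> Y t < Y s"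
  have Y_const: "Y r = Y s" if "s \<le> r" "r \<le> t" for r
  proof -
    have "Y r \<le> Y s" "Y t \<le> Y r"
      using Y_anti_after[OF assms(1,2)] that assms(3) by auto
    with \<open>\<not> Y t < Y s\<close> show ?thesis
      by linarith
  qed
  have W_zero: "\<forall>r\<in>{s<..<t}. W r = 0"
  proof
    fix r assume r: "r \<in> {s<..<t}"
    then have "DERIV Y r :> W r"
      using Y_deriv[of r] assms at_within_interior[of r "{0..}"] by simp
    moreover have "Y r = Y q" if "\<bar>r - q\<bar> < min (r - s) (t - r)" for q
    proof -
      from that have "s \<le> q" "q \<le> t"
        by (auto simp: abs_less_iff)
      with Y_const[of q] Y_const[of r] r show ?thesis
        by simp
    qed
    ultimately show "W r = 0"
      using r by (intro DERIV_local_const[where d = "min (r - s) (t - r)"]) auto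
  qed
  obtain i where i: "i < n" "0 < x 0 i"
    using x0_pos by blast
  have "0 \<le> s"
    using assms by simp
  then obtain \<xi> where \<xi>: "s < \<xi>" "\<xi> < t" "H i t - H i s = (t - s) * H' i \<xi>"
    using \<open>s < t\<close> mvt_half_line[OF H_deriv[OF _ \<open>i < n\<close>]] by blast
  have "H' i \<xi> = 0"
    using H'_zero_where_W_vanishes[OF _ W_zero _ i] \<xi> assms by simp
  with \<xi> H_strict_anti[OF i, of s t] assms show False
    by simp
qed

lemma F'_0_sum_pos: "0 < (\<Sum>k<n. F' k 0)"
proof -
  obtain k where "k < n"
    using y0_pos by blast
  then have "0 < F' k 0"
    by (rule F'_pos) simp_all
  also have "F' k 0 \<le> (\<Sum>k<n. F' k 0)"
    using \<open>k < n\<close> F'_nonneg by (intro member_le_sum) auto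
  finally show ?thesis .
qed

lemma xy_sum_deriv:
  assumes "0 \<le> s"
  shows "((\<lambda>t. \<Sum>j<n. x t j + y t j) has_real_derivative - (\<gamma> * (\<Sum>j<n. y s j)))
    (at s within {0..})"
proof -
  have "((\<lambda>t. \<Sum>j<n. x t j + y t j) has_real_derivative (\<Sum>j<n. - H j s * Y s + U j s))
      (at s within {0..})"
    using x_deriv[OF assms] y_deriv[OF assms] by (intro DERIV_sum DERIV_add) auto
  then show ?thesis
    by (simp add: U_def sum_negf sum_distrib_left)
qed

lemma W_eventually_nonpos: "\<exists>T>0. W T \<le> 0"
proof (rule ccontr)
  assume "\<not> (\<exists>T>0. W T \<le> 0)"
  then have W_pos: "0 < W r" if "0 < r" for r
    using that by force
  have Y_ge: "Y 0 \<le> Y t" if "0 \<le> t" for t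
  proof (cases "t = 0")
    case False
    with that have "0 < t"
      by simp
    then obtain \<xi> where "0 < \<xi>" "\<xi> < t" "Y t - Y 0 = (t - 0) * W \<xi>"
      using mvt_half_line[OF Y_deriv order.refl] by blast
    moreover have "0 < t * W \<xi>"
      using W_pos[of \<xi>] \<open>0 < \<xi>\<close> \<open>0 < t\<close> by simp
    ultimately show ?thesis
      by simp
  qed simp
  define c where "c = \<gamma> * (Y 0 / (\<Sum>k<n. F' k 0))"
  have "0 < c"
    using gamma_pos Y_pos[of 0] F'_0_sum_pos by (simp add: c_def)
  have rate: "c \<le> \<gamma> * (\<Sum>j<n. y s j)" if "0 \<le> s" for s
  proof -
    have "Y 0 \<le> (\<Sum>k<n. F' k 0) * (\<Sum>j<n. y s j)"
      using Y_ge[OF that] Y_le_linear[OF that] by simp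
    then have "Y 0 / (\<Sum>k<n. F' k 0) \<le> (\<Sum>j<n. y s j)"
      using F'_0_sum_pos by (simp add: pos_divide_le_eq mult.commute)
    then show ?thesis
      unfolding c_def by (rule mult_left_mono) (use gamma_pos in simp)
  qed
  define N where "N s = (\<Sum>j<n. x s j + y s j)" for s
  define T where "T = real n / c + 1"
  have "0 < T"
    using \<open>0 < c\<close> by (simp add: T_def add_nonneg_pos)
  then obtain \<xi> where "0 < \<xi>" "N T - N 0 = (T - 0) * - (\<gamma> * (\<Sum>j<n. y \<xi> j))"
    using mvt_half_line[OF xy_sum_deriv order.refl] unfolding N_def by blast
  then have "N T = N 0 - T * (\<gamma> * (\<Sum>j<n. y \<xi> j))"
    by simp
  moreover have "T * c \<le> T * (\<gamma> * (\<Sum>j<n. y \<xi> j))"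
    using rate[of \<xi>] \<open>0 < T\<close> \<open>0 < \<xi>\<close> by (intro mult_left_mono) auto
  moreover have "0 \<le> N T"
    unfolding N_def using state_bounds \<open>0 < T\<close> by (auto intro: sum_nonneg)
  moreover have "N 0 \<le> n"
    unfolding N_def using sum_mono[of "{..<n}" "\<lambda>j. x 0 j + y 0 j" "\<lambda>_. 1"] state_bounds by simp
  moreover have "T * c = n + c"
    using \<open>0 < c\<close> by (simp add: T_def distrib_right)
  ultimately show False
    using \<open>0 < c\<close> by linarith
qed

lemma Y_strict_mono_before:
  assumes W_pos: "\<And>r. 0 \<le> r \<Longrightarrow> r < t\<^sub>1 \<Longrightarrow> 0 < W r" and "0 \<le> s" "s < t" "t \<le> t\<^sub>1"
  shows "Y s < Y t"
proof -
  obtain \<xi> where "s < \<xi>" "\<xi> < t" "Y t - Y s = (t - s) * W \<xi>"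
    using mvt_half_line[OF Y_deriv \<open>0 \<le> s\<close> \<open>s < t\<close>] by blast
  moreover have "0 < W \<xi>"
    using W_pos \<open>s < \<xi>\<close> \<open>\<xi> < t\<close> assms by simp
  with \<open>s < t\<close> have "0 < (t - s) * W \<xi>"
    by simp
  ultimately show ?thesis
    by simp
qed

lemma Y_strict_anti_or_unimodal:
  assumes "(Y has_real_derivative D) (at 0 within {0..})"
  shows "(D \<le> 0 \<longrightarrow> (\<forall>s t. 0 \<le> s \<and> s < t \<longrightarrow> Y t < Y s)) \<and>
    (D > 0 \<longrightarrow> (\<exists>t\<^sub>1>0. (\<forall>s t. 0 \<le> s \<and> s < t \<and> t \<le> t\<^sub>1 \<longrightarrow> Y s < Y t) \<and>
                     (\<forall>s t. t\<^sub>1 \<le> s \<and> s < t \<longrightarrow> Y t < Y s)))"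
proof (intro conjI impI)
  have "at_right 0 \<le> at 0 within {0::real..}"
    by (rule at_le) auto
  have "at 0 within {0::real..} \<noteq> bot"
  proof
    assume "at 0 within {0::real..} = bot"
    with \<open>at_right 0 \<le> at 0 within {0::real..}\<close> have "at_right (0::real) = bot"
      by (metis le_bot)
    then show False
      by simp
  qed
  then have "D = W 0"
    using has_field_derivative_unique[OF assms Y_deriv] by simp
  show "\<forall>s t. 0 \<le> s \<and> s < t \<longrightarrow> Y t < Y s" if "D \<le> 0"
    using Y_strict_anti_after[of 0] that \<open>D = W 0\<close> by simp
  assume "0 < D"
  obtain T where "0 < T" "W T \<le> 0"
    using W_eventually_nonpos by blast
  have "continuous_on {0..T} W"
    using W_cont by (rule continuous_on_subset) auto
  moreover have "0 < W 0"
    using \<open>0 < D\<close> \<open>D = W 0\<close> by simp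
  ultimately obtain t\<^sub>1 where "0 < t\<^sub>1" "t\<^sub>1 \<le> T" "W t\<^sub>1 \<le> 0"
    and W_pos: "\<And>r. 0 \<le> r \<Longrightarrow> r < t\<^sub>1 \<Longrightarrow> 0 < W r"
    using continuous_on_first_nonpos[of 0 T W] \<open>W T \<le> 0\<close> \<open>0 < T\<close> by auto
  show "\<exists>t\<^sub>1>0. (\<forall>s t. 0 \<le> s \<and> s < t \<and> t \<le> t\<^sub>1 \<longrightarrow> Y s < Y t) \<and>
                     (\<forall>s t. t\<^sub>1 \<le> s \<and> s < t \<longrightarrow> Y t < Y s)"
  proof (intro exI[of _ t\<^sub>1] conjI allI impI)
    fix s t assume "0 \<le> s \<and> s < t \<and> t \<le> t\<^sub>1"
    then show "Y s < Y t"
      using Y_strict_mono_before[OF W_pos] by blast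
  next
    fix s t assume "t\<^sub>1 \<le> s \<and> s < t"
    then show "Y t < Y s"
      using Y_strict_anti_after[OF _ \<open>W t\<^sub>1 \<le> 0\<close>] \<open>0 < t\<^sub>1\<close> by simp
  qed (fact \<open>0 < t\<^sub>1\<close>)
qed

end

theorem theorem2:
  fixes n :: nat and \<gamma> :: real
    and g f :: "nat \<Rightarrow> real \<Rightarrow> real"
    and x y :: "real \<Rightarrow> nat \<Rightarrow> real"
  assumes n_pos: "n \<ge> 1"
    and gamma_pos: "\<gamma> > 0"
    and g_C1: "\<forall>i<n. C1_on_unit (g i)"
    and f_C1: "\<forall>j<n. C1_on_unit (f j)"
    and g_nonneg: "\<forall>i<n. \<forall>s\<in>{0..1}. 0 \<le> g i s"
    and f_nonneg: "\<forall>j<n. \<forall>s\<in>{0..1}. 0 \<le> f j s"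
    and g_pos: "\<forall>(u, v)\<in>S_set n. \<forall>i<n. g i (u i) > 0"
    and f_pos: "\<forall>(u, v)\<in>S_set n. \<forall>j<n. f j (v j) > 0"
    and xg_incr: "\<forall>i<n. strict_mono_on {0..1} (\<lambda>s. s * g i s)"
    and fy_incr: "\<forall>j<n. strict_mono_on {0..1} (\<lambda>s. f j s * s)"
    and fy_concave: "\<forall>j<n. concave_on {0..1} (\<lambda>s. f j s * s)"
    and sol_in_S: "\<forall>t\<ge>0. (x t, y t) \<in> S_set n"
    and ode_x: "\<forall>t\<ge>0. \<forall>i<n. ((\<lambda>s. x s i) has_real_derivative
                 (- x t i * g i (x t i) * ybar n f (y t))) (at t within {0..})"
    and ode_y: "\<forall>t\<ge>0. \<forall>i<n. ((\<lambda>s. y s i) has_real_derivative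
                 (x t i * g i (x t i) * ybar n f (y t) - \<gamma> * y t i)) (at t within {0..})"
    and x0_lneq: "(\<forall>i<n. 0 \<le> x 0 i) \<and> (\<exists>i<n. 0 < x 0 i)"
    and x0_le: "\<forall>i<n. x 0 i \<le> 1 - y 0 i"
    and y0_lneq: "(\<forall>i<n. 1 - y 0 i \<le> 1) \<and> (\<exists>i<n. 1 - y 0 i < 1)"
  shows "\<forall>D. ((\<lambda>t. ybar n f (y t)) has_real_derivative D) (at 0 within {0..}) \<longrightarrow>
           (D \<le> 0 \<longrightarrow>
              (\<forall>s t. 0 \<le> s \<and> s < t \<longrightarrow> ybar n f (y t) < ybar n f (y s))) \<and>
           (D > 0 \<longrightarrow>
              (\<exists>th>0. (\<forall>s t. 0 \<le> s \<and> s < t \<and> t \<le> th \<longrightarrow> ybar n f (y s) < ybar n f (y t)) \<and>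
                      (\<forall>s t. th \<le> s \<and> s < t \<longrightarrow> ybar n f (y t) < ybar n f (y s))))"
proof -
  obtain f' where f': "\<forall>j<n. continuous_on {0..1} (f' j) \<and>
      (\<forall>s\<in>{0..1}. (f j has_real_derivative f' j s) (at s within {0..1}))"
    using f_C1 unfolding C1_on_unit_def by metis
  obtain g' where g': "\<forall>i<n. \<forall>s\<in>{0..1}. (g i has_real_derivative g' i s) (at s within {0..1})"
    using g_C1 unfolding C1_on_unit_def by metis
  have g_pos': "0 < g i s" if "i < n" "s \<in> {0..1}" for i s
    using bspec[OF g_pos, of "(\<lambda>_. s, \<lambda>_. 0)"] that by (simp add: S_set_def)
  have f_pos': "0 < f j s" if "j < n" "s \<in> {0..1}" for j s
    using bspec[OF f_pos, of "(\<lambda>_. 0, \<lambda>_. s)"] that by (simp add: S_set_def)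
  interpret rank_one_sir n \<gamma> g f g' f' x y
    by unfold_locales
      (use gamma_pos f' g' g_pos' f_pos' xg_incr fy_incr fy_concave sol_in_S ode_x ode_y
        x0_lneq y0_lneq in auto)
  show ?thesis
    using Y_strict_anti_or_unimodal unfolding Y_def[abs_def] by blast
qed

end
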